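(* For positive semidefinite operators $A,B$, $\mathcal{R}_{A+B}(A)\le I$ in the positive semidefinite order.
   Context: All operators act on a finite-dimensional complex Hilbert space. For positive semidefinite $M$ and self-adjoint $\Delta$ supported in the support of $M$, $\mathcal{R}_M(\Delta)=2\int_0^\infty (M+sI)^{-1}\Delta(M+sI)^{-1}\Delta(M+sI)^{-1}\,ds$, which equals $-\frac{d^2}{dt^2}|_{t=0}\log(M+t\Delta)$. *)

theory Defs
  imports "HOL-Analysis.Analysis"
begin

definition herm_form :: "complex^'n^'n \<Rightarrow> complex^'n \<Rightarrow> complex" where
  "herm_form M x = (\<Sum>i\<in>UNIV. cnj (x $ i) * ((M *v x) $ i))"

text \<open>Positive semidefinite: x* M x is a nonnegative real for every x
  (over the complex numbers this includes self-adjointness).\<close>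
definition psd :: "complex^'n^'n \<Rightarrow> bool" where
  "psd M \<longleftrightarrow> (\<forall>x. herm_form M x \<in> \<real> \<and> 0 \<le> Re (herm_form M x))"

definition psd_le :: "complex^'n^'n \<Rightarrow> complex^'n^'n \<Rightarrow> bool" where
  "psd_le A B \<longleftrightarrow> psd (B - A)"

definition Rop :: "complex^'n^'n \<Rightarrow> complex^'n^'n \<Rightarrow> complex^'n^'n" where
  "Rop M D = 2 *\<^sub>R integral {0::real..}
     (\<lambda>s. matrix_inv (M + mat (complex_of_real s)) ** D **
          matrix_inv (M + mat (complex_of_real s)) ** D **
          matrix_inv (M + mat (complex_of_real s)))"

end

theory Submission
  imports Defs
begin

text \<open>
  Write \<open>M = A + B\<close>, \<open>R s = (M + s I)\<inverse>\<close> and \<open>F s = R s A R s A R s\<close>, so that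
  \<open>Rop (A + B) A = 2 \<integral>\<^sub>0\<^sup>\<infinity> F s ds\<close>.  The claim \<open>Rop (A + B) A \<le> I\<close> amounts to
  \<open>\<integral>\<^sub>0\<^sup>\<infinity> g s ds \<le> |x|\<^sup>2 / 2\<close> for \<open>g s = \<langle>x, F s x\<rangle> \<ge> 0\<close>, plus self-adjointness.

  The proof is a Lyapunov-function argument.  Along the trajectory \<open>u s = R s x\<close>
  (with \<open>u' = - R s u\<close>) the function \<open>V s = s\<^sup>2 |u|\<^sup>2 + 2 s \<langle>u, A u\<rangle>\<close> satisfies
  \<open>0 \<le> V \<le> |x|\<^sup>2\<close> (expand \<open>|x|\<^sup>2 = |(M + s) u|\<^sup>2\<close>) and \<open>V' - 2 g = 2 (\<langle>u, B u\<rangle> - \<langle>B u, R s B u\<rangle>) \<ge> 0\<close>.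
  Hence \<open>\<integral>\<^sub>a\<^sup>b g \<le> |x|\<^sup>2 / 2\<close> for \<open>0 < a \<le> b\<close>, and monotone convergence gives the bound on
  the half-line.
\<close>

section \<open>Hermitian forms as real inner products\<close>

text \<open>We view \<open>complex^'n\<close> as a real inner product space: \<open>x \<bullet> y\<close> is the real part of the
  Hermitian product.\<close>

lemma Re_herm_form: "Re (herm_form G x) = x \<bullet> (G *v x)"
  by (simp add: herm_form_def inner_vec_def inner_complex_def)

lemma Im_herm_form: "Im (herm_form G x) = (\<i> *s x) \<bullet> (G *v x)"
  by (simp add: herm_form_def inner_vec_def inner_complex_def algebra_simps)

lemma inner_imult_left: "(\<i> *s v) \<bullet> (x::complex^'n) = - ((\<i> *s x) \<bullet> v)"
  by (simp add: inner_vec_def inner_complex_def algebra_simps sum_negf[symmetric])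

lemma inner_imult_imult: "(\<i> *s a) \<bullet> (\<i> *s (b::complex^'n)) = a \<bullet> b"
  by (simp add: inner_vec_def inner_complex_def algebra_simps)

lemma imult_imult: "\<i> *s (\<i> *s (v::complex^'n)) = - v"
  by (simp add: vec_eq_iff)

definition self_adjoint :: "complex^'n^'n \<Rightarrow> bool" where
  "self_adjoint G \<longleftrightarrow> (\<forall>v w. (G *v v) \<bullet> w = v \<bullet> (G *v w))"

lemma self_adjointD: "self_adjoint G \<Longrightarrow> (G *v v) \<bullet> w = v \<bullet> (G *v w)"
  by (simp add: self_adjoint_def)

text \<open>A matrix whose Hermitian form is real everywhere is self-adjoint (by polarization),
  and conversely; hence \<open>psd\<close> is the familiar ``symmetric and nonnegative''.\<close>

lemma self_adjoint_iff_herm_form_real: "self_adjoint M \<longleftrightarrow> (\<forall>x. herm_form M x \<in> \<real>)"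
proof
  assume sa: "self_adjoint M"
  have "(\<i> *s x) \<bullet> (M *v x) = 0" for x
  proof -
    have "(\<i> *s x) \<bullet> (M *v x) = (\<i> *s (M *v x)) \<bullet> x"
      using self_adjointD[OF sa, of "\<i> *s x" x] by (simp add: vector_scalar_commute)
    then show ?thesis using inner_imult_left[of "M *v x" x] by simp
  qed
  then show "\<forall>x. herm_form M x \<in> \<real>"
    by (simp add: complex_is_Real_iff Im_herm_form)
next
  assume "\<forall>x. herm_form M x \<in> \<real>"
  then have real: "(\<i> *s x) \<bullet> (M *v x) = 0" for x
    by (metis Im_herm_form complex_is_Real_iff)
  have skew: "(\<i> *s x) \<bullet> (M *v y) = - ((\<i> *s y) \<bullet> (M *v x))" for x y
    using real[of "x + y"] real[of x] real[of y]
    by (simp add: scalar_mult_eq_scaleR matrix_vector_right_distrib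
        inner_add_left inner_add_right)
  show "self_adjoint M" unfolding self_adjoint_def
  proof (intro allI)
    fix v w
    have "- (v \<bullet> (M *v w)) = (\<i> *s (\<i> *s v)) \<bullet> (M *v w)" by (simp add: imult_imult)
    also have "\<dots> = - ((\<i> *s w) \<bullet> (M *v (\<i> *s v)))" by (rule skew)
    also have "\<dots> = - ((\<i> *s w) \<bullet> (\<i> *s (M *v v)))" by (simp add: vector_scalar_commute)
    also have "\<dots> = - ((M *v v) \<bullet> w)" by (simp add: inner_imult_imult inner_commute)
    finally show "(M *v v) \<bullet> w = v \<bullet> (M *v w)" by simp
  qed
qed

lemma psd_iff: "psd M \<longleftrightarrow> self_adjoint M \<and> (\<forall>v. 0 \<le> v \<bullet> (M *v v))"
  by (auto simp: psd_def self_adjoint_iff_herm_form_real Re_herm_form)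

lemma psdD:
  assumes "psd M" shows "self_adjoint M" and "0 \<le> v \<bullet> (M *v v)"
  using assms by (auto simp: psd_iff)

lemma psd_add: "psd A \<Longrightarrow> psd B \<Longrightarrow> psd (A + B)"
  by (simp add: psd_iff self_adjoint_def matrix_vector_mult_add_rdistrib inner_add_left
      inner_add_right)

lemma psd_sandwich:
  assumes P: "self_adjoint P" and Q: "psd Q" shows "psd (P ** Q ** P)"
  unfolding psd_iff self_adjoint_def
proof (intro conjI allI)
  fix v w
  show "(P ** Q ** P *v v) \<bullet> w = v \<bullet> (P ** Q ** P *v w)"
    using self_adjointD[OF P] self_adjointD[OF psdD(1)[OF Q]]
    by (simp add: matrix_vector_mul_assoc[symmetric])
  show "0 \<le> v \<bullet> (P ** Q ** P *v v)"
    using self_adjointD[OF P, of v] psdD(2)[OF Q, of "P *v v"]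
    by (simp add: matrix_vector_mul_assoc[symmetric])
qed

lemma bounded_linear_matrix_form: "bounded_linear (\<lambda>G::complex^'n^'n. w \<bullet> (G *v v))"
proof -
  have "linear (\<lambda>G::complex^'n^'n. G *v v)"
    by (rule linearI) (simp_all add: vec_eq_iff matrix_vector_mult_def scaleR_sum_right
        sum.distrib distrib_right)
  then show ?thesis
    by (intro bounded_linear_inner_right_comp) (simp add: linear_conv_bounded_linear)
qed

lemma integral_matrix_form:
  fixes F :: "'a::euclidean_space \<Rightarrow> complex^'n^'n"
  assumes "F integrable_on S"
  shows "(\<lambda>s. w \<bullet> (F s *v v)) integrable_on S"
    and "w \<bullet> (integral S F *v v) = integral S (\<lambda>s. w \<bullet> (F s *v v))"
  using integrable_linear[OF assms bounded_linear_matrix_form]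
    integral_linear[OF assms bounded_linear_matrix_form] by (simp_all add: o_def)

lemma self_adjoint_integral:
  fixes F :: "'a::euclidean_space \<Rightarrow> complex^'n^'n"
  assumes "F integrable_on S" "negligible N" "\<And>s. s \<in> S - N \<Longrightarrow> self_adjoint (F s)"
  shows "self_adjoint (integral S F)"
  unfolding self_adjoint_def
proof (intro allI)
  fix v w
  have "(integral S F *v v) \<bullet> w = integral S (\<lambda>s. w \<bullet> (F s *v v))"
    using integral_matrix_form(2)[OF assms(1)] by (simp add: inner_commute)
  also have "\<dots> = integral S (\<lambda>s. v \<bullet> (F s *v w))"
    by (rule integral_spike[OF assms(2)]) (use assms(3) self_adjointD in \<open>auto simp: inner_commute\<close>)
  also have "\<dots> = v \<bullet> (integral S F *v w)"
    using integral_matrix_form(2)[OF assms(1)] by simp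
  finally show "(integral S F *v v) \<bullet> w = v \<bullet> (integral S F *v w)" .
qed

lemma has_vector_derivative_quotient:
  fixes f :: "real \<Rightarrow> 'a::real_normed_vector"
  assumes "((\<lambda>y. (f y - f x) /\<^sub>R (y - x)) \<longlongrightarrow> D) (at x)"
  shows "(f has_vector_derivative D) (at x)"
proof -
  have "((\<lambda>y. (f y - f x) /\<^sub>R (y - x) - D) \<longlongrightarrow> 0) (at x)"
    using assms by (simp add: LIM_zero)
  then have lim: "((\<lambda>y. norm ((f y - f x) /\<^sub>R (y - x) - D)) \<longlongrightarrow> 0) (at x)"
    by (rule tendsto_norm_zero)
  have quotient: "norm ((f y - f x) /\<^sub>R (y - x) - D) = norm (f y - f x - (y - x) *\<^sub>R D) / norm (y - x)"
    if "y \<noteq> x" for y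
  proof -
    have "(y - x) *\<^sub>R ((f y - f x) /\<^sub>R (y - x)) = f y - f x"
      using that by simp
    then have "f y - f x - (y - x) *\<^sub>R D = (y - x) *\<^sub>R ((f y - f x) /\<^sub>R (y - x) - D)"
      by (simp add: scaleR_diff_right)
    then show ?thesis using that by simp
  qed
  have "\<forall>\<^sub>F y in at x. y \<noteq> x"
    by (simp add: eventually_at_filter)
  then have "\<forall>\<^sub>F y in at x.
      norm ((f y - f x) /\<^sub>R (y - x) - D) = norm (f y - f x - (y - x) *\<^sub>R D) / norm (y - x)"
    by (rule eventually_mono) (rule quotient)
  with lim have "((\<lambda>y. norm (f y - f x - (y - x) *\<^sub>R D) / norm (y - x)) \<longlongrightarrow> 0) (at x)"
    by (rule Lim_transform_eventually)
  then show ?thesis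
    by (simp add: has_vector_derivative_def has_derivative_iff_norm bounded_linear_scaleR_left)
qed

lemma integral_le_by_antiderivative:
  fixes g V V' :: "real \<Rightarrow> real"
  assumes "a \<le> b" and g: "g integrable_on {a..b}"
    and V: "\<And>t. t \<in> {a..b} \<Longrightarrow> (V has_real_derivative V' t) (at t)"
    and le: "\<And>t. t \<in> {a..b} \<Longrightarrow> g t \<le> V' t"
  shows "integral {a..b} g \<le> V b - V a"
proof -
  have V': "(V' has_integral (V b - V a)) {a..b}"
    using \<open>a \<le> b\<close> V
    by (intro fundamental_theorem_of_calculus)
      (auto simp: has_real_derivative_iff_has_vector_derivative[symmetric]
        intro: has_field_derivative_at_within)
  show ?thesis
    by (rule has_integral_le[OF integrable_integral[OF g] V' le])
qed

text \<open>For an integrand that is nonnegative on \<open>(0, \<infinity>)\<close>, a uniform bound on all integrals over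
  compact intervals \<open>[a, b] \<subseteq> (0, \<infinity>)\<close> bounds the integral over \<open>[0, \<infinity>)\<close>
  (monotone convergence along the intervals \<open>[1/(k+1), k+1]\<close>).\<close>

lemma integral_halfline_le:
  fixes g :: "real \<Rightarrow> real"
  assumes int: "g integrable_on {0..}" and nonneg: "\<And>s. 0 < s \<Longrightarrow> 0 \<le> g s"
    and bound: "\<And>a b. 0 < a \<Longrightarrow> a \<le> b \<Longrightarrow> integral {a..b} g \<le> C"
  shows "integral {0..} g \<le> C"
proof -
  let ?S = "{0<..} :: real set"
  define I where "I k = {1 / real (Suc k)..real (Suc k)}" for k
  define f where "f k = (\<lambda>s. if s \<in> I k then g s else 0)" for k
  have I_pos: "0 < t" if "t \<in> I k" for k t
    using that by (auto simp: I_def intro: less_le_trans[of 0 "1 / real (Suc k)"])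
  have I_le: "1 / real (Suc k) \<le> real (Suc k)" for k
    by (simp add: field_simps)
  have S_eq: "integral {0..} g = integral ?S g" and int_S: "g integrable_on ?S"
    using int
    by (auto intro!: integral_spike_set integrable_spike_set[OF int]
        negligible_subset[OF negligible_sing[of 0]])
  have int_I: "g integrable_on I k" for k
    unfolding I_def by (rule integrable_on_subinterval[OF int_S]) (use I_pos I_def in blast)
  have f_int: "f k integrable_on ?S" and f_eq: "integral ?S (f k) = integral (I k) g" for k
  proof -
    have I_S: "I k \<inter> ?S = I k" using I_pos by auto
    show "f k integrable_on ?S"
      unfolding f_def integrable_restrict_Int I_S by (rule int_I)
    show "integral ?S (f k) = integral (I k) g"
      unfolding f_def integral_restrict_Int I_S ..
  qed
  have f_le: "integral ?S (f k) \<le> C" for k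
    unfolding f_eq I_def by (rule bound[OF _ I_le]) simp
  have f_ge: "0 \<le> integral ?S (f k)" for k
    unfolding f_eq by (rule integral_nonneg[OF int_I]) (use I_pos nonneg in blast)
  have f_mono: "f k s \<le> f (Suc k) s" if "s \<in> ?S" for k s
  proof -
    have "1 / real (Suc (Suc k)) \<le> 1 / real (Suc k)" by (simp add: frac_le)
    then show ?thesis using that nonneg[of s] by (auto simp: f_def I_def)
  qed
  have f_lim: "(\<lambda>k. f k s) \<longlonglongrightarrow> g s" if "s \<in> ?S" for s
  proof (rule tendsto_eventually)
    from that have "0 < s" by simp
    obtain K :: nat where K: "max s (1 / s) < real K" using reals_Archimedean2 by blast
    have "s \<in> I k" if "K \<le> k" for k
    proof -
      have "1 / s < real (Suc k)" "s \<le> real (Suc k)" using K that by linarith+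
      then show ?thesis using \<open>0 < s\<close> by (simp add: I_def field_simps)
    qed
    then show "\<forall>\<^sub>F k in sequentially. f k s = g s"
      unfolding eventually_sequentially f_def by auto
  qed
  have "bounded (range (\<lambda>k. integral ?S (f k)))"
    unfolding bounded_iff using f_le f_ge by (intro exI[of _ C]) auto
  then have "(\<lambda>k. integral ?S (f k)) \<longlonglongrightarrow> integral ?S g"
    using monotone_convergence_increasing[OF f_int f_mono f_lim] by blast
  then have "integral ?S g \<le> C"
    by (rule LIMSEQ_le_const2) (use f_le in blast)
  then show ?thesis by (simp add: S_eq)
qed

section \<open>Resolvents of positive semidefinite matrices\<close>

lemma scaleR_matrix_vector_mult: "((c::real) *\<^sub>R (G::complex^'n^'m)) *v v = c *\<^sub>R (G *v v)"
  by (simp add: vec_eq_iff matrix_vector_mult_def scaleR_sum_right)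

lemma complex_matrix_vector_scaleR: "(G::complex^'n^'m) *v (c *\<^sub>R v) = c *\<^sub>R (G *v v)"
  using linear_iff matrix_vector_mul_linear by blast

text \<open>\<open>resolvent M s = (M + s I)\<inverse>\<close>; for psd \<open>M\<close> and \<open>s > 0\<close> the shifted matrix is positive
  definite with \<open>\<langle>v, (M + s I) v\<rangle> \<ge> s |v|\<^sup>2\<close>, hence invertible.\<close>

definition resolvent :: "complex^'n^'n \<Rightarrow> real \<Rightarrow> complex^'n^'n" where
  "resolvent M s = matrix_inv (M + mat (complex_of_real s))"

lemma shift_mult: "(M + mat (complex_of_real s)) *v v = M *v v + s *\<^sub>R v"
proof -
  have "(mat (complex_of_real s) *v v) $ i = (s *\<^sub>R v) $ i" for i
  proof -
    have "(mat (complex_of_real s) *v v) $ i = complex_of_real s * v $ i"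
      by (simp add: matrix_vector_mult_def mat_def if_distrib if_distribR cong: if_cong)
    moreover have "(s *\<^sub>R v) $ i = complex_of_real s * v $ i"
      by (simp only: vector_scaleR_component) (simp add: scaleR_conv_of_real)
    ultimately show ?thesis by simp
  qed
  then have "mat (complex_of_real s) *v v = s *\<^sub>R v" by (simp add: vec_eq_iff)
  then show ?thesis by (simp add: matrix_vector_mult_add_rdistrib)
qed

context
  fixes M :: "complex^'n^'n"
  assumes M: "psd M"
begin

lemma shift_ge: "s * (v \<bullet> v) \<le> v \<bullet> ((M + mat (complex_of_real s)) *v v)"
  using psdD(2)[OF M, of v] by (simp add: shift_mult inner_add_right)

lemma self_adjoint_shift: "self_adjoint (M + mat (complex_of_real s))"
  using psdD(1)[OF M] by (simp add: self_adjoint_def shift_mult inner_add_left inner_add_right inner_commute)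

lemma shift_invertible:
  assumes "s > 0" shows "invertible (M + mat (complex_of_real s))"
proof -
  have "inj ((*v) (M + mat (complex_of_real s)))"
  proof (rule injI)
    fix v w assume "(M + mat (complex_of_real s)) *v v = (M + mat (complex_of_real s)) *v w"
    then have "(M + mat (complex_of_real s)) *v (v - w) = 0" by (simp add: matrix_vector_mult_diff_distrib)
    then have "s * ((v - w) \<bullet> (v - w)) \<le> 0" using shift_ge[of s "v - w"] by simp
    then have "(v - w) \<bullet> (v - w) \<le> 0" using assms by (simp add: mult_le_0_iff)
    then show "v = w" using inner_ge_zero[of "v - w"] by simp
  qed
  then show ?thesis by (simp add: invertible_left_inverse matrix_left_invertible_injective)
qed

lemma resolvent_inverse:
  assumes "s > 0"
  shows "(M + mat (complex_of_real s)) ** resolvent M s = mat 1"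
    and "resolvent M s ** (M + mat (complex_of_real s)) = mat 1"
  using someI_ex[OF shift_invertible[OF assms, unfolded invertible_def]]
  by (simp_all add: resolvent_def matrix_inv_def)

lemma resolvent_left: "s > 0 \<Longrightarrow> resolvent M s *v ((M + mat (complex_of_real s)) *v v) = v"
  by (simp add: matrix_vector_mul_assoc resolvent_inverse)

lemma resolvent_right: "s > 0 \<Longrightarrow> (M + mat (complex_of_real s)) *v (resolvent M s *v v) = v"
  by (simp add: matrix_vector_mul_assoc resolvent_inverse)

lemma psd_resolvent:
  assumes "s > 0" shows "psd (resolvent M s)"
  unfolding psd_iff self_adjoint_def
proof (intro conjI allI)
  let ?N = "M + mat (complex_of_real s)" and ?R = "resolvent M s"
  fix v w
  have "(?R *v v) \<bullet> w = (?R *v v) \<bullet> (?N *v (?R *v w))" by (simp add: resolvent_right assms)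
  also have "\<dots> = (?N *v (?R *v v)) \<bullet> (?R *v w)" using self_adjointD[OF self_adjoint_shift] by simp
  finally show "(?R *v v) \<bullet> w = v \<bullet> (?R *v w)" by (simp add: resolvent_right assms)
  have "v \<bullet> (?R *v v) = (?R *v v) \<bullet> (?N *v (?R *v v))"
    by (simp add: resolvent_right assms inner_commute)
  also have "s * ((?R *v v) \<bullet> (?R *v v)) \<le> \<dots>" by (rule shift_ge)
  finally show "0 \<le> v \<bullet> (?R *v v)"
    using assms by (meson inner_ge_zero mult_nonneg_nonneg order.trans less_imp_le)
qed

lemma resolvent_norm_le:
  assumes "s > 0" shows "norm (resolvent M s *v v) \<le> norm v / s"
proof -
  let ?y = "resolvent M s *v v"
  have "s * (norm ?y)\<^sup>2 \<le> ?y \<bullet> ((M + mat (complex_of_real s)) *v ?y)"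
    using shift_ge[of s ?y] by (simp add: power2_norm_eq_inner)
  also have "\<dots> = ?y \<bullet> v" by (simp add: resolvent_right assms)
  also have "\<dots> \<le> norm ?y * norm v" by (rule norm_cauchy_schwarz)
  finally have "s * (norm ?y)\<^sup>2 \<le> norm ?y * norm v" .
  then have "s * norm ?y \<le> norm v"
    by (cases "norm ?y = 0") (auto simp: power2_eq_square)
  then show ?thesis using assms by (simp add: field_simps)
qed

lemma resolvent_identity:
  assumes "s > 0" "t > 0"
  shows "resolvent M t *v v - resolvent M s *v v = (s - t) *\<^sub>R (resolvent M t *v (resolvent M s *v v))"
proof -
  let ?w = "resolvent M s *v v"
  have "(M + mat (complex_of_real t)) *v ?w = (M + mat (complex_of_real s)) *v ?w + (t - s) *\<^sub>R ?w"
    by (simp only: shift_mult) (simp add: algebra_simps)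
  then have "(M + mat (complex_of_real t)) *v ?w = v + (t - s) *\<^sub>R ?w"
    by (simp add: resolvent_right assms)
  then have "?w = resolvent M t *v (v + (t - s) *\<^sub>R ?w)"
    by (metis resolvent_left[OF assms(2)])
  then show ?thesis
    by (simp add: matrix_vector_right_distrib complex_matrix_vector_scaleR algebra_simps)
qed

text \<open>By the resolvent identity and the norm bound, \<open>|R t v - R s v| \<le> 2 |t - s| |R s v| / s\<close>
  near \<open>s\<close>.\<close>

lemma resolvent_continuous:
  assumes "s > 0" shows "((\<lambda>t. resolvent M t *v v) \<longlongrightarrow> resolvent M s *v v) (at s)"
proof -
  let ?w = "resolvent M s *v v"
  have "\<forall>\<^sub>F t in at s. s / 2 < t"
    using order_tendstoD(1)[OF tendsto_ident_at, of "s / 2" s] assms by simp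
  then have bound: "\<forall>\<^sub>F t in at s. norm (resolvent M t *v v - ?w) \<le> \<bar>t - s\<bar> * (2 * norm ?w / s)"
  proof (rule eventually_mono)
    fix t assume t: "s / 2 < t"
    then have "t > 0" using assms by simp
    have "norm (resolvent M t *v ?w) \<le> norm ?w / t" by (rule resolvent_norm_le[OF \<open>t > 0\<close>])
    also have "\<dots> \<le> 2 * norm ?w / s"
    proof -
      have "s * norm ?w \<le> (2 * t) * norm ?w" using t by (intro mult_right_mono) auto
      then show ?thesis using assms \<open>t > 0\<close> by (simp add: field_simps)
    qed
    finally have "\<bar>t - s\<bar> * norm (resolvent M t *v ?w) \<le> \<bar>t - s\<bar> * (2 * norm ?w / s)"
      by (rule mult_left_mono) simp
    then show "norm (resolvent M t *v v - ?w) \<le> \<bar>t - s\<bar> * (2 * norm ?w / s)"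
      using resolvent_identity[OF assms \<open>t > 0\<close>, of v] by (simp add: abs_minus_commute)
  qed
  have "((\<lambda>t. \<bar>t - s\<bar> * (2 * norm ?w / s)) \<longlongrightarrow> 0) (at s)"
    by (rule tendsto_eq_intros | simp)+
  with bound have "((\<lambda>t. resolvent M t *v v - ?w) \<longlongrightarrow> 0) (at s)"
    by (rule Lim_null_comparison)
  then show ?thesis by (rule LIM_zero_cancel)
qed

text \<open>Differentiating the resolvent identity: \<open>d/ds R s v = - R s (R s v)\<close>.\<close>

lemma resolvent_derivative:
  assumes "s > 0"
  shows "((\<lambda>t. resolvent M t *v v) has_vector_derivative - (resolvent M s *v (resolvent M s *v v))) (at s)"
proof (rule has_vector_derivative_quotient)
  let ?w = "resolvent M s *v v"
  have "\<forall>\<^sub>F t in at s. 0 < t \<and> t \<noteq> s"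
    using order_tendstoD(1)[OF tendsto_ident_at assms] by (simp add: eventually_conj_iff eventually_neq_at_within)
  then have "\<forall>\<^sub>F t in at s. - (resolvent M t *v ?w) = (resolvent M t *v v - ?w) /\<^sub>R (t - s)"
  proof (rule eventually_mono)
    fix t assume t: "0 < t \<and> t \<noteq> s"
    then have "(resolvent M t *v v - ?w) /\<^sub>R (t - s) = ((s - t) / (t - s)) *\<^sub>R (resolvent M t *v ?w)"
      using resolvent_identity[OF assms, of t v] by (simp add: divide_inverse mult.commute)
    also have "(s - t) / (t - s) = -1"
      using t by (simp add: field_simps)
    finally show "- (resolvent M t *v ?w) = (resolvent M t *v v - ?w) /\<^sub>R (t - s)"
      by simp
  qed
  moreover have "((\<lambda>t. - (resolvent M t *v ?w)) \<longlongrightarrow> - (resolvent M s *v ?w)) (at s)"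
    by (intro tendsto_minus resolvent_continuous assms)
  ultimately show "((\<lambda>t. (resolvent M t *v v - ?w) /\<^sub>R (t - s)) \<longlongrightarrow> - (resolvent M s *v ?w)) (at s)"
    by (rule Lim_transform_eventually[rotated])
qed

end

definition Rop_integrand :: "complex^'n^'n \<Rightarrow> complex^'n^'n \<Rightarrow> real \<Rightarrow> complex^'n^'n" where
  "Rop_integrand M D s = resolvent M s ** D ** resolvent M s ** D ** resolvent M s"

text \<open>\<open>Rop M D\<close> rewritten with the named integrand; the integrand is psd for \<open>s > 0\<close>, being
  \<open>R (D R D) R\<close> with \<open>R\<close> psd and \<open>D\<close> self-adjoint.\<close>

lemma Rop_eq: "Rop M D = 2 *\<^sub>R integral {0..} (Rop_integrand M D)"
  by (simp add: Rop_def Rop_integrand_def[abs_def] resolvent_def)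

lemma Rop_integrand_mult:
  "Rop_integrand M D s *v v = resolvent M s *v (D *v (resolvent M s *v (D *v (resolvent M s *v v))))"
  by (simp add: Rop_integrand_def matrix_vector_mul_assoc[symmetric])

lemma psd_Rop_integrand:
  assumes "psd M" "self_adjoint D" "s > 0"
  shows "psd (Rop_integrand M D s)"
proof -
  have "psd (D ** resolvent M s ** D)"
    by (rule psd_sandwich[OF assms(2) psd_resolvent[OF assms(1,3)]])
  then have "psd (resolvent M s ** (D ** resolvent M s ** D) ** resolvent M s)"
    by (rule psd_sandwich[OF psdD(1)[OF psd_resolvent[OF assms(1,3)]]])
  then show ?thesis by (simp add: Rop_integrand_def matrix_mul_assoc)
qed

text \<open>Compression inequality \<open>B R B \<le> B\<close> for \<open>R = (A + B + s I)\<inverse>\<close>: with \<open>q = R (B u)\<close>,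
  expand \<open>0 \<le> \<langle>u - q, B (u - q)\<rangle>\<close> and use \<open>\<langle>q, B q\<rangle> \<le> \<langle>q, (A + B + s I) q\<rangle> = \<langle>q, B u\<rangle>\<close>.\<close>

lemma resolvent_compression_le:
  assumes A: "psd A" and B: "psd B" and "s > 0"
  shows "(B *v u) \<bullet> (resolvent (A + B) s *v (B *v u)) \<le> u \<bullet> (B *v u)"
proof -
  let ?z = "B *v u"
  define q where "q = resolvent (A + B) s *v ?z"
  have Nq: "(A + B + mat (complex_of_real s)) *v q = ?z"
    unfolding q_def by (rule resolvent_right[OF psd_add[OF A B] \<open>s > 0\<close>])
  have "q \<bullet> (B *v q) \<le> q \<bullet> (A *v q) + q \<bullet> (B *v q) + s * (q \<bullet> q)"
    using psdD(2)[OF A, of q] \<open>s > 0\<close> by simp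
  also have "\<dots> = q \<bullet> ?z"
    unfolding Nq[symmetric] shift_mult by (simp add: matrix_vector_mult_add_rdistrib inner_add_right)
  finally have qBq: "q \<bullet> (B *v q) \<le> q \<bullet> ?z" .
  have "0 \<le> (u - q) \<bullet> (B *v (u - q))" by (rule psdD(2)[OF B])
  also have "\<dots> = u \<bullet> ?z - 2 * (?z \<bullet> q) + q \<bullet> (B *v q)"
    using self_adjointD[OF psdD(1)[OF B], of u q]
    by (simp add: matrix_vector_mult_diff_distrib inner_diff_left inner_diff_right inner_commute)
  finally show ?thesis using qBq by (simp add: q_def inner_commute)
qed

section \<open>A Lyapunov function along the resolvent trajectory\<close>

context
  fixes A B :: "complex^'n^'n" and x :: "complex^'n"
  assumes A: "psd A" and B: "psd B"
begin

text \<open>The trajectory \<open>u s = R s x\<close>, the Lyapunov function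
  \<open>V s = s\<^sup>2 |u|\<^sup>2 + 2 s \<langle>u, A u\<rangle>\<close> and its derivative \<open>V'\<close> (computed from \<open>u' = - R s u\<close>).\<close>

private lemma psd_sum: "psd (A + B)"
  using A B by (rule psd_add)

definition trajectory :: "real \<Rightarrow> complex^'n" where
  "trajectory s = resolvent (A + B) s *v x"

definition lyapunov :: "real \<Rightarrow> real" where
  "lyapunov s = s\<^sup>2 * (trajectory s \<bullet> trajectory s) + 2 * s * (trajectory s \<bullet> (A *v trajectory s))"

definition lyapunov_deriv :: "real \<Rightarrow> real" where
  "lyapunov_deriv s = (let u = trajectory s; r = resolvent (A + B) s *v u in
     2 * s * (u \<bullet> u) - 2 * s\<^sup>2 * (u \<bullet> r) + 2 * (u \<bullet> (A *v u)) - 4 * s * ((A *v u) \<bullet> r))"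

lemma lyapunov_derivative:
  assumes "s > 0" shows "(lyapunov has_real_derivative lyapunov_deriv s) (at s)"
proof -
  let ?u = "trajectory s" and ?r = "resolvent (A + B) s *v trajectory s"
  have du: "(trajectory has_vector_derivative - ?r) (at s)"
    unfolding trajectory_def[abs_def] by (rule resolvent_derivative[OF psd_sum assms])
  have dAu: "((\<lambda>t. A *v trajectory t) has_vector_derivative - (A *v ?r)) (at s)"
    using bounded_linear.has_vector_derivative[OF _ du, of "(*v) A"]
    by (simp add: linear_conv_bounded_linear matrix_vector_mult_diff_distrib[of A 0, simplified])
  have "((\<lambda>t. trajectory t \<bullet> trajectory t) has_real_derivative - 2 * (?u \<bullet> ?r)) (at s)"
    using bounded_bilinear.has_vector_derivative[OF bounded_bilinear_inner du du]
    by (simp add: has_real_derivative_iff_has_vector_derivative inner_commute)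
  moreover have "((\<lambda>t. trajectory t \<bullet> (A *v trajectory t)) has_real_derivative - 2 * ((A *v ?u) \<bullet> ?r)) (at s)"
    using bounded_bilinear.has_vector_derivative[OF bounded_bilinear_inner du dAu]
      self_adjointD[OF psdD(1)[OF A], of ?u ?r]
    by (simp add: has_real_derivative_iff_has_vector_derivative inner_commute)
  ultimately show ?thesis
    unfolding lyapunov_def[abs_def] lyapunov_deriv_def Let_def
    by (auto intro!: derivative_eq_intros simp: algebra_simps power2_eq_square)
qed

text \<open>Since \<open>x = (A + B) u + s u\<close>, expanding \<open>|x|\<^sup>2\<close> exhibits \<open>V\<close> as part of a sum of nonnegative terms.\<close>

lemma lyapunov_bounds:
  assumes "s > 0" shows "0 \<le> lyapunov s" and "lyapunov s \<le> x \<bullet> x"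
proof -
  let ?u = "trajectory s"
  show "0 \<le> lyapunov s"
    unfolding lyapunov_def using psdD(2)[OF A, of ?u] assms by simp
  have x: "x = (A + B) *v ?u + s *\<^sub>R ?u"
    using resolvent_right[OF psd_sum assms, of x] by (simp add: trajectory_def shift_mult)
  have "x \<bullet> x = ((A + B) *v ?u) \<bullet> ((A + B) *v ?u) + 2 * s * (?u \<bullet> ((A + B) *v ?u)) + s\<^sup>2 * (?u \<bullet> ?u)"
    by (subst (1 2) x) (simp add: inner_add_left inner_add_right inner_commute power2_eq_square algebra_simps)
  also have "\<dots> = ((A + B) *v ?u) \<bullet> ((A + B) *v ?u) + 2 * s * (?u \<bullet> (B *v ?u)) + lyapunov s"
    by (simp add: lyapunov_def matrix_vector_mult_add_rdistrib inner_add_right algebra_simps)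
  finally show "lyapunov s \<le> x \<bullet> x"
    using psdD(2)[OF B, of ?u] assms by simp
qed

text \<open>In fact \<open>V' - 2 g = 2 (u \<bullet> B u - B u \<bullet> R (B u))\<close>, which is nonnegative by
  \<open>resolvent_compression_le\<close>.\<close>

lemma lyapunov_deriv_ge:
  assumes "s > 0"
  shows "2 * (x \<bullet> (Rop_integrand (A + B) A s *v x)) \<le> lyapunov_deriv s"
proof -
  let ?R = "resolvent (A + B) s" and ?N = "A + B + mat (complex_of_real s)"
  let ?u = "trajectory s" and ?r = "resolvent (A + B) s *v trajectory s"
  define y where "y = A *v ?u"
  define z where "z = B *v ?u"
  define q where "q = ?R *v z"
  have saR: "self_adjoint ?R" by (rule psdD(1)[OF psd_resolvent[OF psd_sum assms]])
  have saN: "self_adjoint ?N" by (rule self_adjoint_shift[OF psd_sum])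
  have Nu: "?N *v ?u = x" by (simp add: trajectory_def resolvent_right[OF psd_sum assms])
  have Nr: "?N *v ?r = ?u" by (simp add: resolvent_right[OF psd_sum assms])
  have Nq: "?N *v q = z" by (simp add: q_def resolvent_right[OF psd_sum assms])
  have y: "y = x - s *\<^sub>R ?u - z"
    using Nu unfolding shift_mult by (simp add: y_def z_def matrix_vector_mult_add_rdistrib algebra_simps)
  have "?N *v (?u - s *\<^sub>R ?r - q) = y"
    by (simp add: matrix_vector_mult_diff_distrib complex_matrix_vector_scaleR Nu Nr Nq y)
  then have Ry: "?R *v y = ?u - s *\<^sub>R ?r - q"
    by (metis resolvent_left[OF psd_sum assms])
  have g: "x \<bullet> (Rop_integrand (A + B) A s *v x) = y \<bullet> (?R *v y)"
    using self_adjointD[OF saR] self_adjointD[OF psdD(1)[OF A]]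
    by (simp add: Rop_integrand_mult y_def trajectory_def)
  have xr: "x \<bullet> ?r = ?u \<bullet> ?u"
    using self_adjointD[OF saN, of ?u ?r] by (simp add: Nu Nr)
  have xq: "x \<bullet> q = ?u \<bullet> z"
    using self_adjointD[OF saN, of ?u q] by (simp add: Nu Nq)
  have uq: "?u \<bullet> q = ?r \<bullet> z"
    using self_adjointD[OF saN, of ?r q] by (simp add: Nr Nq)
  have yr: "y \<bullet> ?r = ?u \<bullet> ?u - s * (?u \<bullet> ?r) - ?r \<bullet> z"
    using xr by (simp add: y inner_diff_left inner_commute[of z])
  have yq: "y \<bullet> q = ?u \<bullet> z - s * (?r \<bullet> z) - z \<bullet> q"
    using xq uq by (simp add: y inner_diff_left)
  have V': "lyapunov_deriv s = 2 * s * (?u \<bullet> ?u) - 2 * s\<^sup>2 * (?u \<bullet> ?r) + 2 * (y \<bullet> ?u) - 4 * s * (y \<bullet> ?r)"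
    unfolding lyapunov_deriv_def Let_def y_def[symmetric] by (simp add: inner_commute[of _ y])
  have "y \<bullet> (?R *v y) = y \<bullet> ?u - s * (y \<bullet> ?r) - y \<bullet> q"
    by (simp add: Ry inner_diff_right)
  then have "lyapunov_deriv s - 2 * (y \<bullet> (?R *v y)) = 2 * (?u \<bullet> z - z \<bullet> q)"
    unfolding V' by (simp add: yr yq algebra_simps power2_eq_square)
  moreover have "z \<bullet> q \<le> ?u \<bullet> z"
    unfolding z_def q_def by (rule resolvent_compression_le[OF A B assms])
  ultimately show ?thesis using g by simp
qed

text \<open>Integrating \<open>V' \<ge> 2 g\<close> and using \<open>0 \<le> V \<le> |x|\<^sup>2\<close> bounds the quadratic form of the
  integral in \<open>Rop\<close>.\<close>

lemma Rop_integral_form_le: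
  assumes int: "Rop_integrand (A + B) A integrable_on {0..}"
  shows "x \<bullet> (integral {0..} (Rop_integrand (A + B) A) *v x) \<le> x \<bullet> x / 2"
proof -
  let ?g = "\<lambda>s. x \<bullet> (Rop_integrand (A + B) A s *v x)"
  have int_g: "?g integrable_on {0..}"
    by (rule integral_matrix_form(1)[OF int])
  have "integral {0..} ?g \<le> x \<bullet> x / 2"
  proof (rule integral_halfline_le[OF int_g])
    show "0 \<le> ?g s" if "0 < s" for s
      by (rule psdD(2)[OF psd_Rop_integrand[OF psd_sum psdD(1)[OF A] that]])
    fix a b :: real assume "0 < a" "a \<le> b"
    have int_ab: "(\<lambda>s. 2 * ?g s) integrable_on {a..b}"
      by (intro integrable_on_mult_right integrable_on_subinterval[OF int_g]) (use \<open>0 < a\<close> in auto)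
    have "integral {a..b} (\<lambda>s. 2 * ?g s) \<le> lyapunov b - lyapunov a"
      by (rule integral_le_by_antiderivative[where V' = lyapunov_deriv, OF \<open>a \<le> b\<close> int_ab])
        (use \<open>0 < a\<close> lyapunov_derivative lyapunov_deriv_ge in auto)
    also have "\<dots> \<le> x \<bullet> x"
      using lyapunov_bounds[of a] lyapunov_bounds[of b] \<open>0 < a\<close> \<open>a \<le> b\<close> by simp
    finally show "integral {a..b} ?g \<le> x \<bullet> x / 2" by simp
  qed
  then show ?thesis by (simp add: integral_matrix_form(2)[OF int])
qed

end

text \<open>If the
  integrand is not integrable the integral is \<open>0\<close> and both claims are trivial.\<close>

lemma Rop_bound:
  assumes A: "psd A" and B: "psd B"
  shows "self_adjoint (Rop (A + B) A)" and "x \<bullet> (Rop (A + B) A *v x) \<le> x \<bullet> x"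
proof (atomize (full), cases "Rop_integrand (A + B) A integrable_on {0..}")
  case False
  then show "self_adjoint (Rop (A + B) A) \<and> x \<bullet> (Rop (A + B) A *v x) \<le> x \<bullet> x"
    by (simp add: Rop_eq not_integrable_integral self_adjoint_def)
next
  case True
  let ?I = "integral {0..} (Rop_integrand (A + B) A)"
  have "self_adjoint ?I"
    by (rule self_adjoint_integral[OF True negligible_sing[of 0]])
      (auto intro!: psdD(1)[OF psd_Rop_integrand[OF psd_add[OF A B] psdD(1)[OF A]]])
  moreover have "x \<bullet> (?I *v x) \<le> x \<bullet> x / 2"
    by (rule Rop_integral_form_le[OF A B True])
  ultimately show "self_adjoint (Rop (A + B) A) \<and> x \<bullet> (Rop (A + B) A *v x) \<le> x \<bullet> x"
    by (simp add: Rop_eq scaleR_matrix_vector_mult self_adjoint_def)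
qed

theorem lemma5:
  fixes A B :: "complex^'n^'n"
  assumes "psd A" and "psd B"
  shows "psd_le (Rop (A + B) A) (mat 1)"
proof -
  let ?R = "Rop (A + B) A"
  have "self_adjoint (mat 1 - ?R)"
    using Rop_bound(1)[OF assms]
    by (simp add: self_adjoint_def matrix_vector_mult_diff_rdistrib inner_diff_left inner_diff_right)
  moreover have "0 \<le> v \<bullet> ((mat 1 - ?R) *v v)" for v
    using Rop_bound(2)[OF assms, of v] by (simp add: matrix_vector_mult_diff_rdistrib inner_diff_right)
  ultimately show ?thesis
    by (simp add: psd_le_def psd_iff)
qed

end
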